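(* Let $N\ge 3$, $\alpha\in\mathbb{C}^N$, and let $i,j,q\in\{1,\dots,N\}$ be distinct. If $u$ is holomorphic on $\Omega'$ and $M_{i,j}(\alpha)u=M_{i,q}(\alpha)u=M_{j,q}(\alpha)u=0$, then $v=L_{i,j}(\alpha)u$ satisfies $M_{i,j}(\alpha+e_i-e_j)v=M_{i,q}(\alpha+e_i-e_j)v=M_{j,q}(\alpha+e_i-e_j)v=0$.
   Context: $x=(x_1,\dots,x_N)$, $\partial_p=\partial/\partial x_p$, $e_p$ the $p$-th standard unit vector of $\mathbb{C}^N$. For $\beta\in\mathbb{C}^N$ and $p\ne q$: $M_{p,q}(\beta)=\partial_p\partial_q+\frac{\beta_q}{x_p-x_q}\partial_p+\frac{\beta_p}{x_q-x_p}\partial_q$ and $L_{p,q}(\beta)=(x_p-x_q)\partial_q+\beta_q$. $\Omega'$ is a simply connected domain in $\{x\in\mathbb{C}^N:x_a\ne x_b\ \forall a\ne b\}$. *)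

theory Defs
  imports "HOL-Analysis.Analysis"
begin

text \<open>Points of C^N are vectors complex^'n, the index type 'n having N = CARD('n) elements.\<close>

definition holo_on :: "(complex^'n \<Rightarrow> complex) \<Rightarrow> (complex^'n) set \<Rightarrow> bool" where
  "holo_on u S \<longleftrightarrow> (\<forall>x\<in>S. \<exists>D. (u has_derivative D) (at x) \<and>
       (\<forall>(c::complex) w. D (c *s w) = c * D w))"

definition pd :: "'n \<Rightarrow> (complex^'n \<Rightarrow> complex) \<Rightarrow> complex^'n \<Rightarrow> complex" where
  "pd p f x = deriv (\<lambda>z. f (\<chi> k. if k = p then z else x $ k)) (x $ p)"

definition unitv :: "'n \<Rightarrow> complex^'n" where
  "unitv p = axis p 1"

definition Mop :: "complex^'n \<Rightarrow> 'n \<Rightarrow> 'n \<Rightarrow> (complex^'n \<Rightarrow> complex) \<Rightarrow> complex^'n \<Rightarrow> complex" where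
  "Mop \<beta> p q u x = pd p (pd q u) x + \<beta> $ q / (x $ p - x $ q) * pd p u x
                    + \<beta> $ p / (x $ q - x $ p) * pd q u x"

definition Lop :: "complex^'n \<Rightarrow> 'n \<Rightarrow> 'n \<Rightarrow> (complex^'n \<Rightarrow> complex) \<Rightarrow> complex^'n \<Rightarrow> complex" where
  "Lop \<beta> p q u x = (x $ p - x $ q) * pd q u x + \<beta> $ q * u x"

end

theory Submission
  imports Defs "HOL-Complex_Analysis.Cauchy_Integral_Formula"
begin

text \<open>Holomorphy of \<open>u\<close> is used only through two facts: partial derivatives of \<open>u\<close> are again
  holomorphic, and they commute. Both come from Cauchy's integral formula for \<open>\<partial>\<^sub>k u\<close> on a circle
  in the \<open>k\<close>-th variable, differentiated under the integral sign in another variable \<open>x\<^sub>p\<close>.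
  The rest is algebra. Writing \<open>E\<^sub>p\<^sub>q(\<beta>) u = (x\<^sub>p - x\<^sub>q) M\<^sub>p\<^sub>,\<^sub>q(\<beta>) u\<close>, \<open>\<beta> = \<alpha> + e\<^sub>i - e\<^sub>j\<close> and
  \<open>v = L\<^sub>i\<^sub>,\<^sub>j(\<alpha>) u\<close>, one has the polynomial identities
    \<open>E\<^sub>i\<^sub>j(\<beta>) v = (x\<^sub>i - x\<^sub>j) \<partial>\<^sub>j E\<^sub>i\<^sub>j(\<alpha>) u + (\<alpha>\<^sub>j - 1) E\<^sub>i\<^sub>j(\<alpha>) u\<close>,
    \<open>E\<^sub>i\<^sub>q(\<beta>) v = (x\<^sub>i - x\<^sub>j) \<partial>\<^sub>j E\<^sub>i\<^sub>q(\<alpha>) u + \<alpha>\<^sub>j E\<^sub>i\<^sub>q(\<alpha>) u + E\<^sub>j\<^sub>q(\<alpha>) u\<close>,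
    \<open>E\<^sub>j\<^sub>q(\<beta>) v = (x\<^sub>i - x\<^sub>j) \<partial>\<^sub>j E\<^sub>j\<^sub>q(\<alpha>) u + (\<alpha>\<^sub>j - 1) E\<^sub>j\<^sub>q(\<alpha>) u\<close>,
  and the right-hand sides vanish on \<open>\<Omega>'\<close> because \<open>E\<^sub>p\<^sub>q(\<alpha>) u\<close> does.\<close>

definition coord_upd :: "'a^'n \<Rightarrow> 'n \<Rightarrow> 'a \<Rightarrow> 'a^'n" where
  "coord_upd x p w = (\<chi> k. if k = p then w else x $ k)"

lemma coord_upd_nth [simp]: "coord_upd x p w $ k = (if k = p then w else x $ k)"
  by (simp add: coord_upd_def)

lemma coord_upd_triv [simp]: "coord_upd x p (x $ p) = x"
  by (simp add: vec_eq_iff)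

lemma coord_upd_upd_same [simp]: "coord_upd (coord_upd x p w) p z = coord_upd x p z"
  by (simp add: vec_eq_iff)

lemma coord_upd_commute:
  "k \<noteq> p \<Longrightarrow> coord_upd (coord_upd x p w) k z = coord_upd (coord_upd x k z) p w"
  by (auto simp: vec_eq_iff)

lemma coord_upd_eq_add_axis: "coord_upd x p w = x + axis p (w - x $ p :: 'a :: ab_group_add)"
  by (simp add: vec_eq_iff axis_def)

lemma pd_eq_deriv_coord_upd: "pd p f x = deriv (\<lambda>z. f (coord_upd x p z)) (x $ p)"
  by (simp add: pd_def coord_upd_def)

lemma norm_axis: "norm (axis p (h :: 'a :: real_normed_vector)) = norm h"
proof -
  have "(norm (axis p h $ i))\<^sup>2 = (if i = p then (norm h)\<^sup>2 else 0)" for i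
    by (simp add: axis_def)
  then show ?thesis
    by (simp add: norm_vec_def L2_set_def)
qed

lemma dist_coord_upd: "dist (coord_upd x p w) x = dist w (x $ p :: 'a :: real_normed_vector)"
  by (simp add: coord_upd_eq_add_axis dist_norm norm_axis)

lemma bounded_linear_axis: "bounded_linear (axis p :: 'a :: real_normed_vector \<Rightarrow> 'a^'n)"
proof (rule bounded_linear_intro[where K=1])
  show "norm (axis p h :: 'a^'n) \<le> norm h * 1" for h
    by (simp add: norm_axis)
qed (simp_all add: axis_def vec_eq_iff)

lemma coord_upd_has_derivative: "(coord_upd x p has_derivative axis p) (at w)"
proof -
  have "((\<lambda>w. x + axis p (w - x $ p)) has_derivative (\<lambda>h. 0 + axis p (h - 0))) (at w)"
    by (intro derivative_intros bounded_linear.has_derivative[OF bounded_linear_axis])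
  then show ?thesis
    by (simp add: coord_upd_eq_add_axis[abs_def])
qed

lemma continuous_on_coord_upd [continuous_intros]:
  "continuous_on S a \<Longrightarrow> continuous_on S b \<Longrightarrow> continuous_on S (\<lambda>z. coord_upd (a z) k (b z))"
  unfolding coord_upd_def
proof (rule continuous_on_vec_lambda)
  fix m assume "continuous_on S a" "continuous_on S b"
  then show "continuous_on S (\<lambda>z. if m = k then b z else a z $ m)"
    by (cases "m = k") (auto intro: continuous_intros)
qed

lemma open_coord_slice:
  assumes "open S"
  shows "open {w. coord_upd x p w \<in> S}"
proof -
  have "continuous_on UNIV (\<lambda>w. coord_upd x p w)"
    by (intro continuous_intros)
  from open_vimage[OF assms this] show ?thesis
    by (simp add: vimage_def)
qed

lemma coord_upd_in_ball:
  fixes x y :: "'a :: real_normed_vector^'n"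
  assumes "dist y x < r" "dist \<eta> (x $ k) \<le> r"
  shows "coord_upd y k \<eta> \<in> ball x (3 * r)"
proof -
  have "dist (coord_upd y k \<eta>) x \<le> dist (coord_upd y k \<eta>) y + dist y x"
    by (rule dist_triangle)
  also have "dist (coord_upd y k \<eta>) y \<le> dist \<eta> (x $ k) + dist (x $ k) (y $ k)"
    unfolding dist_coord_upd by (rule dist_triangle)
  also have "dist (x $ k) (y $ k) \<le> dist y x"
    by (metis dist_commute dist_vec_nth_le)
  finally show ?thesis
    using assms by (simp add: dist_commute)
qed

text \<open>Continuous and holomorphic in each variable separately. By Osgood's lemma this is holomorphy;
  in this form, stability under partial differentiation follows from one-variable Cauchy theory.\<close>
definition sep_holomorphic_on :: "(complex^'n \<Rightarrow> complex) \<Rightarrow> (complex^'n) set \<Rightarrow> bool" where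
  "sep_holomorphic_on f S \<longleftrightarrow> continuous_on S f \<and>
     (\<forall>x\<in>S. \<forall>p. (\<lambda>w. f (coord_upd x p w)) field_differentiable (at (x $ p)))"

lemma holo_on_imp_sep_holomorphic_on:
  assumes "holo_on u S"
  shows "sep_holomorphic_on u S"
  unfolding sep_holomorphic_on_def
proof safe
  show "continuous_on S u"
    using assms unfolding holo_on_def
    by (intro continuous_at_imp_continuous_on ballI) (auto dest: has_derivative_continuous)
next
  fix x p assume "x \<in> S"
  then obtain D where D: "(u has_derivative D) (at x)" "\<And>(c::complex) w. D (c *s w) = c * D w"
    using assms unfolding holo_on_def by blast
  have "((\<lambda>w. u (coord_upd x p w)) has_derivative D \<circ> axis p) (at (x $ p))"
  proof -
    have "(u has_derivative D) (at (coord_upd x p (x $ p)))"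
      using D(1) by simp
    from diff_chain_at[OF coord_upd_has_derivative this] show ?thesis
      by (simp add: o_def)
  qed
  moreover have "D \<circ> axis p = (*) (D (axis p 1))"
  proof
    fix h :: complex
    have "axis p h = h *s axis p 1"
      by (simp add: axis_def vec_eq_iff)
    then show "(D \<circ> axis p) h = D (axis p 1) * h"
      by (simp add: D(2))
  qed
  ultimately show "(\<lambda>w. u (coord_upd x p w)) field_differentiable (at (x $ p))"
    unfolding field_differentiable_def has_field_derivative_def by metis
qed

lemma holomorphic_on_coord_slice:
  assumes "sep_holomorphic_on f S" "open S"
  shows "(\<lambda>w. f (coord_upd x p w)) holomorphic_on {w. coord_upd x p w \<in> S}"
proof -
  have "(\<lambda>w. f (coord_upd x p w)) field_differentiable (at w)" if "coord_upd x p w \<in> S" for w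
  proof -
    have "(\<lambda>z. f (coord_upd (coord_upd x p w) p z)) field_differentiable (at (coord_upd x p w $ p))"
      using assms that unfolding sep_holomorphic_on_def by blast
    then show ?thesis
      by simp
  qed
  then show ?thesis
    using open_coord_slice[OF assms(2)]
    by (simp add: holomorphic_on_open field_differentiable_def)
qed

lemma has_field_derivative_coord_slice:
  assumes "sep_holomorphic_on f S" "coord_upd x p w \<in> S"
  shows "((\<lambda>z. f (coord_upd x p z)) has_field_derivative pd p f (coord_upd x p w)) (at w within T)"
proof -
  have "(\<lambda>z. f (coord_upd (coord_upd x p w) p z)) field_differentiable (at (coord_upd x p w $ p))"
    using assms unfolding sep_holomorphic_on_def by blast
  then show ?thesis
    by (simp add: pd_eq_deriv_coord_upd DERIV_deriv_iff_field_differentiable has_field_derivative_at_within)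
qed

lemma has_field_derivative_pd:
  assumes "sep_holomorphic_on f S" "x \<in> S"
  shows "((\<lambda>z. f (coord_upd x p z)) has_field_derivative pd p f x) (at (x $ p) within T)"
  using has_field_derivative_coord_slice[of f S x p "x $ p"] assms by simp

lemma continuous_on_circlepath [continuous_intros]:
  "continuous_on S f \<Longrightarrow> continuous_on S (\<lambda>z. circlepath c r (f z))"
  unfolding circlepath by (intro continuous_intros)

definition circle_deriv_kernel :: "complex \<Rightarrow> real \<Rightarrow> (complex \<Rightarrow> complex) \<Rightarrow> complex \<Rightarrow> real \<Rightarrow> complex" where
  "circle_deriv_kernel c r h z t =
     h (circlepath c r t) / (circlepath c r t - z)\<^sup>2 * vector_derivative (circlepath c r) (at t)"

lemma has_integral_circle_deriv_kernel:
  assumes "h holomorphic_on W" "cball c r \<subseteq> W" "z \<in> ball c r"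
  shows "(circle_deriv_kernel c r h z has_integral (2 * of_real pi * \<i> * deriv h z)) (cbox 0 1)"
proof -
  have h: "h holomorphic_on cball c r"
    using assms(1,2) by (rule holomorphic_on_subset)
  have "((\<lambda>w. h w / (w - z) ^ Suc 1) has_contour_integral (2 * pi * \<i> / fact 1 * (deriv ^^ 1) h z))
          (circlepath c r)"
    using h assms(3)
    by (intro Cauchy_has_contour_integral_higher_derivative_circlepath)
       (auto intro: holomorphic_on_imp_continuous_on holomorphic_on_subset)
  then have "((\<lambda>t. h (circlepath c r t) / (circlepath c r t - z)\<^sup>2 *
      vector_derivative (circlepath c r) (at t within {0..1})) has_integral (2 * of_real pi * \<i> * deriv h z)) {0..1}"
    unfolding has_contour_integral_def by (simp add: power2_eq_square)
  then show ?thesis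
    unfolding cbox_interval
    by (rule has_integral_eq[rotated])
       (simp add: circle_deriv_kernel_def vector_derivative_circlepath vector_derivative_circlepath01)
qed

lemma pd_has_integral_circle_deriv_kernel:
  assumes f: "sep_holomorphic_on f S" "open S" and S: "ball x (3 * r) \<subseteq> S" and y: "dist y x < r"
  shows "(circle_deriv_kernel (x $ k) r (\<lambda>\<eta>. f (coord_upd y k \<eta>)) (y $ k)
            has_integral (2 * of_real pi * \<i> * pd k f y)) (cbox 0 1)"
proof -
  have "cball (x $ k) r \<subseteq> {\<eta>. coord_upd y k \<eta> \<in> S}"
    using coord_upd_in_ball[OF y] S by (auto simp: dist_commute)
  moreover have "y $ k \<in> ball (x $ k) r"
    using dist_vec_nth_le[of y k x] y by (simp add: dist_commute)
  ultimately show ?thesis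
    using has_integral_circle_deriv_kernel[OF holomorphic_on_coord_slice[OF f]]
    by (simp add: pd_eq_deriv_coord_upd)
qed

lemma continuous_on_circle_deriv_kernel:
  assumes g: "continuous_on S g" and S: "ball x (3 * r) \<subseteq> S"
  shows "continuous_on (ball x r \<times> cbox 0 1)
           (\<lambda>(y, t). circle_deriv_kernel (x $ k) r (\<lambda>\<eta>. g (coord_upd y k \<eta>)) (y $ k) t)"
proof -
  let ?\<gamma> = "\<lambda>z. circlepath (x $ k) r (snd z)"
  have r: "r \<ge> 0" if "z \<in> ball x r \<times> cbox 0 1" for z
    using that by (auto simp: mem_Times_iff intro: order.trans[OF zero_le_dist less_imp_le])
  have in_S: "coord_upd (fst z) k (?\<gamma> z) \<in> S" if "z \<in> ball x r \<times> cbox 0 1" for z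
  proof -
    have "dist (?\<gamma> z) (x $ k) \<le> r"
      using r[OF that] by (simp add: circlepath dist_norm norm_mult norm_exp_eq_Re)
    moreover have "dist (fst z) x < r"
      using that by (auto simp: dist_commute)
    ultimately show ?thesis
      using coord_upd_in_ball S by blast
  qed
  have ne: "?\<gamma> z - fst z $ k \<noteq> 0" if "z \<in> ball x r \<times> cbox 0 1" for z
  proof
    assume "?\<gamma> z - fst z $ k = 0"
    moreover have "dist (?\<gamma> z) (x $ k) = r"
      using r[OF that] by (simp add: circlepath dist_norm norm_mult norm_exp_eq_Re)
    moreover have "dist (fst z $ k) (x $ k) < r"
      using that dist_vec_nth_le[of "fst z" k x] by (auto simp: dist_commute)
    ultimately show False
      by simp
  qed
  have g\<gamma>: "continuous_on (ball x r \<times> cbox 0 1) (\<lambda>z. g (coord_upd (fst z) k (?\<gamma> z)))"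
    by (rule continuous_on_compose2[OF g]) (use in_S in \<open>auto intro!: continuous_intros\<close>)
  have den: "continuous_on (ball x r \<times> cbox 0 1) (\<lambda>z. (?\<gamma> z - fst z $ k)\<^sup>2)"
    by (intro continuous_intros)
  have vd: "continuous_on A (\<lambda>z. 2 * pi * \<i> * r * exp (2 * of_real pi * \<i> * of_real (snd z)))" for A
    by (intro continuous_intros)
  have "continuous_on (ball x r \<times> cbox 0 1) (\<lambda>z. g (coord_upd (fst z) k (?\<gamma> z)) /
     (?\<gamma> z - fst z $ k)\<^sup>2 * (2 * pi * \<i> * r * exp (2 * of_real pi * \<i> * of_real (snd z))))"
    using ne by (intro continuous_on_mult'[OF continuous_on_divide[OF g\<gamma> den] vd]) auto
  then show ?thesis
    by (simp add: circle_deriv_kernel_def vector_derivative_circlepath split_beta)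
qed

lemma open_contains_ball_thrice:
  assumes "open S" "x \<in> S"
  obtains r where "r > 0" "ball x (3 * r) \<subseteq> S"
proof -
  obtain e where "e > 0" "ball x e \<subseteq> S"
    using assms open_contains_ball by blast
  then show ?thesis
    using that[of "e / 3"] by simp
qed

lemma continuous_on_pd:
  assumes f: "sep_holomorphic_on f S" "open S"
  shows "continuous_on S (pd k f)"
proof (rule continuous_at_imp_continuous_on, rule ballI)
  fix x assume "x \<in> S"
  with f(2) obtain r where r: "r > 0" "ball x (3 * r) \<subseteq> S"
    by (rule open_contains_ball_thrice)
  let ?I = "\<lambda>y. integral (cbox 0 1) (circle_deriv_kernel (x $ k) r (\<lambda>\<eta>. f (coord_upd y k \<eta>)) (y $ k))"
  have "continuous_on (ball x r) (\<lambda>y. ?I y / (2 * of_real pi * \<i>))"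
    using f(1) r(2) unfolding sep_holomorphic_on_def
    by (intro continuous_intros integral_continuous_on_param continuous_on_circle_deriv_kernel) auto
  moreover have "?I y / (2 * of_real pi * \<i>) = pd k f y" if "y \<in> ball x r" for y
    using pd_has_integral_circle_deriv_kernel[OF f r(2), of y k] that
    by (simp add: dist_commute integral_unique)
  ultimately have "continuous_on (ball x r) (pd k f)"
    by (rule continuous_on_eq)
  then show "isCont (pd k f) x"
    using r(1) by (simp add: continuous_on_eq_continuous_at)
qed

lemma continuous_on_circle_deriv_kernel_coord_line:
  assumes g: "continuous_on S g" and "p \<noteq> k" and S: "ball x (3 * r) \<subseteq> S"
  shows "continuous_on (ball (x $ p) r \<times> cbox 0 1)
           (\<lambda>(w, t). circle_deriv_kernel (x $ k) r (\<lambda>\<eta>. g (coord_upd (coord_upd x p w) k \<eta>)) (x $ k) t)"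
proof -
  let ?K = "\<lambda>(y, t). circle_deriv_kernel (x $ k) r (\<lambda>\<eta>. g (coord_upd y k \<eta>)) (y $ k) t"
  let ?line = "\<lambda>(w, t). (coord_upd x p w, t)"
  have "continuous_on (ball (x $ p) r \<times> cbox 0 1) (?K \<circ> ?line)"
  proof (rule continuous_on_compose)
    show "continuous_on (ball (x $ p) r \<times> cbox 0 1) ?line"
      by (auto intro!: continuous_intros simp: split_beta)
    have "?line ` (ball (x $ p) r \<times> cbox 0 1) \<subseteq> ball x r \<times> cbox 0 1"
      using dist_coord_upd[of x p] by (auto simp: dist_commute)
    then show "continuous_on (?line ` (ball (x $ p) r \<times> cbox 0 1)) ?K"
      by (rule continuous_on_subset[OF continuous_on_circle_deriv_kernel[OF g S]])
  qed
  then show ?thesis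
    using \<open>p \<noteq> k\<close> by (simp add: o_def split_beta)
qed

lemma has_field_derivative_circle_deriv_kernel:
  assumes f: "sep_holomorphic_on f S" and "p \<noteq> k" and S: "ball x (3 * r) \<subseteq> S"
    and w: "dist w (x $ p) < r"
  shows "((\<lambda>w. circle_deriv_kernel (x $ k) r (\<lambda>\<eta>. f (coord_upd (coord_upd x p w) k \<eta>)) (x $ k) t)
           has_field_derivative
         circle_deriv_kernel (x $ k) r (\<lambda>\<eta>. pd p f (coord_upd (coord_upd x p w) k \<eta>)) (x $ k) t)
         (at w within U)"
proof -
  let ?\<eta> = "circlepath (x $ k) r t"
  have "r \<ge> 0"
    using w zero_le_dist[of w "x $ p"] by linarith
  then have "dist ?\<eta> (x $ k) \<le> r"
    by (simp add: circlepath dist_norm norm_mult norm_exp_eq_Re)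
  moreover have "dist (coord_upd x p w) x < r"
    using w by (simp add: dist_coord_upd)
  ultimately have "coord_upd (coord_upd x k ?\<eta>) p w \<in> S"
    using coord_upd_in_ball S coord_upd_commute[OF \<open>p \<noteq> k\<close>[symmetric]] by (metis subsetD)
  from has_field_derivative_coord_slice[OF f this]
  show ?thesis
    unfolding circle_deriv_kernel_def coord_upd_commute[OF \<open>p \<noteq> k\<close>[symmetric]]
    by (intro DERIV_cmult_right DERIV_cdivide) simp
qed

text \<open>The integral on the right is Cauchy's formula for \<open>\<partial>\<^sub>k \<partial>\<^sub>p f\<close>, hence the symmetry of
  mixed partials below.\<close>
lemma has_field_derivative_pd_cross:
  assumes f: "sep_holomorphic_on f S" "open S" and "p \<noteq> k" and r: "r > 0" "ball x (3 * r) \<subseteq> S"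
  shows "((\<lambda>w. pd k f (coord_upd x p w)) has_field_derivative
           integral (cbox 0 1) (circle_deriv_kernel (x $ k) r (\<lambda>\<eta>. pd p f (coord_upd x k \<eta>)) (x $ k))
             / (2 * of_real pi * \<i>)) (at (x $ p))"
proof -
  define U where "U = ball (x $ p) r"
  define F where "F w = circle_deriv_kernel (x $ k) r (\<lambda>\<eta>. f (coord_upd (coord_upd x p w) k \<eta>)) (x $ k)"
    for w
  define F' where "F' w = circle_deriv_kernel (x $ k) r (\<lambda>\<eta>. pd p f (coord_upd (coord_upd x p w) k \<eta>)) (x $ k)"
    for w
  have U: "open U" "convex U" "x $ p \<in> U"
    using r(1) by (auto simp: U_def)
  have F: "(F w has_integral (2 * of_real pi * \<i> * pd k f (coord_upd x p w))) (cbox 0 1)" if "w \<in> U" for w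
  proof -
    have "dist (coord_upd x p w) x < r"
      using that dist_coord_upd[of x p w] by (simp add: U_def dist_commute)
    from pd_has_integral_circle_deriv_kernel[OF f r(2) this, of k] show ?thesis
      using \<open>p \<noteq> k\<close> by (simp add: F_def)
  qed
  have "continuous_on (U \<times> cbox 0 1) (\<lambda>(w, t). F' w t)"
    unfolding F'_def U_def
    by (rule continuous_on_circle_deriv_kernel_coord_line[OF continuous_on_pd[OF f] \<open>p \<noteq> k\<close> r(2)])
  then have "((\<lambda>w. integral (cbox 0 1) (F w)) has_field_derivative integral (cbox 0 1) (F' (x $ p)))
               (at (x $ p) within U)"
    using F U(2,3) unfolding F_def F'_def
    by (intro leibniz_rule_field_derivative has_field_derivative_circle_deriv_kernel[OF f(1) \<open>p \<noteq> k\<close> r(2)])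
       (auto simp: U_def dist_commute has_integral_integrable)
  then have "((\<lambda>w. integral (cbox 0 1) (F w) / (2 * of_real pi * \<i>)) has_field_derivative
               integral (cbox 0 1) (F' (x $ p)) / (2 * of_real pi * \<i>)) (at (x $ p))"
    using at_within_open[OF U(3,1)] by (auto intro: DERIV_cdivide)
  then show ?thesis
    unfolding F'_def coord_upd_triv
    by (rule has_field_derivative_transform_within_open[OF _ U(1,3)]) (use F in \<open>force dest: integral_unique\<close>)
qed

lemma sep_holomorphic_on_pd:
  assumes f: "sep_holomorphic_on f S" "open S"
  shows "sep_holomorphic_on (pd k f) S"
  unfolding sep_holomorphic_on_def
proof (intro conjI ballI allI)
  show "continuous_on S (pd k f)"
    using f by (rule continuous_on_pd)
next
  fix x p assume "x \<in> S"
  show "(\<lambda>w. pd k f (coord_upd x p w)) field_differentiable at (x $ p)"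
  proof (cases "p = k")
    case True
    let ?W = "{w. coord_upd x k w \<in> S}"
    have W: "open ?W" "x $ k \<in> ?W"
      using open_coord_slice[OF f(2)] \<open>x \<in> S\<close> by auto
    have "deriv (\<lambda>w. f (coord_upd x k w)) holomorphic_on ?W"
      by (intro holomorphic_deriv holomorphic_on_coord_slice f W(1))
    then have "deriv (\<lambda>w. f (coord_upd x k w)) field_differentiable at (x $ k)"
      using W holomorphic_on_imp_differentiable_at by blast
    moreover have "pd k f (coord_upd x k w) = deriv (\<lambda>w. f (coord_upd x k w)) w" for w
      by (simp add: pd_eq_deriv_coord_upd)
    ultimately show ?thesis
      using True by simp
  next
    case False
    obtain r where "r > 0" "ball x (3 * r) \<subseteq> S"
      using f(2) \<open>x \<in> S\<close> by (rule open_contains_ball_thrice)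
    from has_field_derivative_pd_cross[OF f False this] show ?thesis
      unfolding field_differentiable_def by blast
  qed
qed

lemma pd_commute:
  assumes f: "sep_holomorphic_on f S" "open S" and "x \<in> S"
  shows "pd p (pd k f) x = pd k (pd p f) x"
proof (cases "p = k")
  case False
  obtain r where r: "r > 0" "ball x (3 * r) \<subseteq> S"
    using f(2) \<open>x \<in> S\<close> by (rule open_contains_ball_thrice)
  let ?I = "integral (cbox 0 1) (circle_deriv_kernel (x $ k) r (\<lambda>\<eta>. pd p f (coord_upd x k \<eta>)) (x $ k))"
  have "pd p (pd k f) x = ?I / (2 * of_real pi * \<i>)"
    unfolding pd_eq_deriv_coord_upd[of p "pd k f"]
    by (rule DERIV_imp_deriv[OF has_field_derivative_pd_cross[OF f False r]])
  moreover have "?I = 2 * of_real pi * \<i> * pd k (pd p f) x"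
    using pd_has_integral_circle_deriv_kernel[OF sep_holomorphic_on_pd[OF f] f(2) r(2), of x k] r(1)
    by (simp add: integral_unique)
  ultimately show ?thesis
    by simp
qed simp

lemma pd_eqI: "((\<lambda>w. f (coord_upd x p w)) has_field_derivative D) (at (x $ p)) \<Longrightarrow> pd p f x = D"
  by (simp add: pd_eq_deriv_coord_upd DERIV_imp_deriv)

lemma pd_cong:
  assumes "open S" "x \<in> S" "\<And>y. y \<in> S \<Longrightarrow> f y = g y"
  shows "pd p f x = pd p g x"
  unfolding pd_eq_deriv_coord_upd
proof (rule deriv_cong_ev[OF _ refl])
  have "eventually (\<lambda>w. w \<in> {w. coord_upd x p w \<in> S}) (nhds (x $ p))"
    using assms(2) by (intro eventually_nhds_in_open open_coord_slice assms(1)) simp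
  then show "\<forall>\<^sub>F w in nhds (x $ p). f (coord_upd x p w) = g (coord_upd x p w)"
    by (rule eventually_mono) (simp add: assms(3))
qed

lemma pd_eq_0_if_vanishing:
  assumes "open S" "x \<in> S" "\<And>y. y \<in> S \<Longrightarrow> f y = 0"
  shows "pd p f x = 0"
  using pd_cong[OF assms(1,2), of f "\<lambda>_. 0" p] assms(3) by (simp add: pd_eq_deriv_coord_upd)

lemma pd_Lop:
  assumes u: "sep_holomorphic_on u S" "open S" and y: "y \<in> S"
  shows "pd m (Lop \<beta> p q u) y =
           (of_bool (m = p) - of_bool (m = q)) * pd q u y + (y $ p - y $ q) * pd m (pd q u) y + \<beta> $ q * pd m u y"
  unfolding Lop_def
  by (rule pd_eqI)
     (auto intro!: derivative_eq_intros has_field_derivative_pd[OF u(1) y]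
        has_field_derivative_pd[OF sep_holomorphic_on_pd[OF u] y] simp: algebra_simps)

lemma pd_Lop_other:
  assumes u: "sep_holomorphic_on u S" "open S" and y: "y \<in> S" and "m \<noteq> p" "m \<noteq> q"
  shows "pd m (Lop \<beta> p q u) y = Lop \<beta> p q (pd m u) y"
  using pd_Lop[OF u y, of m \<beta> p q] pd_commute[OF u y, of m q] assms(4,5) by (simp add: Lop_def)

lemma unitv_nth [simp]: "unitv p $ k = of_bool (k = p)"
  by (simp add: unitv_def axis_def)

lemma pd_Lop_snd:
  assumes u: "sep_holomorphic_on u S" "open S" and y: "y \<in> S" and "p \<noteq> q"
  shows "pd q (Lop \<beta> p q u) y = Lop (\<beta> - unitv q) p q (pd q u) y"
  using pd_Lop[OF u y, of q \<beta> p q] \<open>p \<noteq> q\<close> by (simp add: Lop_def algebra_simps)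

definition Mop_cleared :: "complex^'n \<Rightarrow> 'n \<Rightarrow> 'n \<Rightarrow> (complex^'n \<Rightarrow> complex) \<Rightarrow> complex^'n \<Rightarrow> complex" where
  "Mop_cleared \<beta> p q u x = (x $ p - x $ q) * pd p (pd q u) x + \<beta> $ q * pd p u x - \<beta> $ p * pd q u x"

lemma Mop_cleared_eq_mult_Mop:
  assumes "x $ p \<noteq> x $ q"
  shows "Mop_cleared \<beta> p q u x = (x $ p - x $ q) * Mop \<beta> p q u x"
proof -
  define d where "d = x $ p - x $ q"
  have "d \<noteq> 0" and minus_d: "x $ q - x $ p = - d"
    using assms by (simp_all add: d_def)
  then show ?thesis
    unfolding Mop_cleared_def Mop_def d_def[symmetric] minus_d by (simp add: field_simps)
qed

lemma pd_Mop_cleared: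
  assumes u: "sep_holomorphic_on u S" "open S" and y: "y \<in> S"
  shows "pd m (Mop_cleared \<beta> p q u) y =
           (of_bool (m = p) - of_bool (m = q)) * pd p (pd q u) y + (y $ p - y $ q) * pd m (pd p (pd q u)) y
           + \<beta> $ q * pd m (pd p u) y - \<beta> $ p * pd m (pd q u) y"
proof -
  have u1: "sep_holomorphic_on (pd k u) S" for k
    using sep_holomorphic_on_pd[OF u] .
  show ?thesis
    unfolding Mop_cleared_def
    by (rule pd_eqI)
       (auto intro!: derivative_eq_intros has_field_derivative_pd[OF u1 y]
          has_field_derivative_pd[OF sep_holomorphic_on_pd[OF u1 u(2)] y] simp: algebra_simps)
qed

lemma Mop_cleared_Lop_ij:
  assumes u: "sep_holomorphic_on u S" "open S" and x: "x \<in> S" and "i \<noteq> j"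
    and E: "\<And>y. y \<in> S \<Longrightarrow> Mop_cleared \<alpha> i j u y = 0"
  shows "Mop_cleared (\<alpha> + unitv i - unitv j) i j (Lop \<alpha> i j u) x = 0"
proof -
  have u1: "sep_holomorphic_on (pd m u) S" for m
    using sep_holomorphic_on_pd[OF u] .
  have "pd i (pd j (Lop \<alpha> i j u)) x = pd i (Lop (\<alpha> - unitv j) i j (pd j u)) x"
    using pd_Lop_snd[OF u _ \<open>i \<noteq> j\<close>] by (rule pd_cong[OF u(2) x])
  also have "\<dots> = pd j (pd j u) x + (x $ i - x $ j) * pd i (pd j (pd j u)) x + (\<alpha> $ j - 1) * pd i (pd j u) x"
    using pd_Lop[OF u1 u(2) x] \<open>i \<noteq> j\<close> by simp
  finally have vij: "pd i (pd j (Lop \<alpha> i j u)) x = \<dots>" .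
  have "pd j (pd i u) x = pd i (pd j u) x" "pd j (pd i (pd j u)) x = pd i (pd j (pd j u)) x"
    using pd_commute[OF u x] pd_commute[OF u1 u(2) x] by blast+
  then have "Mop_cleared (\<alpha> + unitv i - unitv j) i j (Lop \<alpha> i j u) x =
      (x $ i - x $ j) * pd j (Mop_cleared \<alpha> i j u) x + (\<alpha> $ j - 1) * Mop_cleared \<alpha> i j u x"
    unfolding Mop_cleared_def[of "\<alpha> + unitv i - unitv j"] vij pd_Lop[OF u x] pd_Mop_cleared[OF u x]
    using \<open>i \<noteq> j\<close>
    by (simp add: Mop_cleared_def algebra_simps)
  moreover have "pd j (Mop_cleared \<alpha> i j u) x = 0"
    using pd_eq_0_if_vanishing[OF u(2) x] E by blast
  ultimately show ?thesis
    using E[OF x] by simp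
qed

lemma Mop_cleared_Lop_iq:
  assumes u: "sep_holomorphic_on u S" "open S" and x: "x \<in> S" and "i \<noteq> j" "i \<noteq> q" "j \<noteq> q"
    and Eiq: "\<And>y. y \<in> S \<Longrightarrow> Mop_cleared \<alpha> i q u y = 0"
    and Ejq: "\<And>y. y \<in> S \<Longrightarrow> Mop_cleared \<alpha> j q u y = 0"
  shows "Mop_cleared (\<alpha> + unitv i - unitv j) i q (Lop \<alpha> i j u) x = 0"
proof -
  have u1: "sep_holomorphic_on (pd m u) S" for m
    using sep_holomorphic_on_pd[OF u] .
  have "pd i (pd q (Lop \<alpha> i j u)) x = pd i (Lop \<alpha> i j (pd q u)) x"
    using pd_Lop_other[OF u _ \<open>i \<noteq> q\<close>[symmetric] \<open>j \<noteq> q\<close>[symmetric]] by (rule pd_cong[OF u(2) x])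
  also have "\<dots> = pd j (pd q u) x + (x $ i - x $ j) * pd i (pd j (pd q u)) x + \<alpha> $ j * pd i (pd q u) x"
    using pd_Lop[OF u1 u(2) x] \<open>i \<noteq> j\<close> by simp
  finally have viq: "pd i (pd q (Lop \<alpha> i j u)) x = \<dots>" .
  have "pd j (pd i u) x = pd i (pd j u) x" "pd q (pd j u) x = pd j (pd q u) x"
      "pd j (pd i (pd q u)) x = pd i (pd j (pd q u)) x"
    using pd_commute[OF u x] pd_commute[OF u1 u(2) x] by blast+
  then have "Mop_cleared (\<alpha> + unitv i - unitv j) i q (Lop \<alpha> i j u) x =
      (x $ i - x $ j) * pd j (Mop_cleared \<alpha> i q u) x + \<alpha> $ j * Mop_cleared \<alpha> i q u x
        + Mop_cleared \<alpha> j q u x"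
    unfolding Mop_cleared_def[of "\<alpha> + unitv i - unitv j"] viq pd_Lop[OF u x] pd_Mop_cleared[OF u x]
    using assms(4-6)
    by (simp add: Mop_cleared_def algebra_simps)
  moreover have "pd j (Mop_cleared \<alpha> i q u) x = 0"
    using pd_eq_0_if_vanishing[OF u(2) x] Eiq by blast
  ultimately show ?thesis
    using Eiq[OF x] Ejq[OF x] by simp
qed

lemma Mop_cleared_Lop_jq:
  assumes u: "sep_holomorphic_on u S" "open S" and x: "x \<in> S" and "i \<noteq> j" "i \<noteq> q" "j \<noteq> q"
    and Ejq: "\<And>y. y \<in> S \<Longrightarrow> Mop_cleared \<alpha> j q u y = 0"
  shows "Mop_cleared (\<alpha> + unitv i - unitv j) j q (Lop \<alpha> i j u) x = 0"
proof -
  have u1: "sep_holomorphic_on (pd m u) S" for m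
    using sep_holomorphic_on_pd[OF u] .
  have "pd j (pd q (Lop \<alpha> i j u)) x = pd j (Lop \<alpha> i j (pd q u)) x"
    using pd_Lop_other[OF u _ \<open>i \<noteq> q\<close>[symmetric] \<open>j \<noteq> q\<close>[symmetric]] by (rule pd_cong[OF u(2) x])
  also have "\<dots> = - pd j (pd q u) x + (x $ i - x $ j) * pd j (pd j (pd q u)) x + \<alpha> $ j * pd j (pd q u) x"
    using pd_Lop[OF u1 u(2) x] \<open>i \<noteq> j\<close> by simp
  finally have vjq: "pd j (pd q (Lop \<alpha> i j u)) x = \<dots>" .
  have "pd q (pd j u) x = pd j (pd q u) x"
    using pd_commute[OF u x] by blast
  then have "Mop_cleared (\<alpha> + unitv i - unitv j) j q (Lop \<alpha> i j u) x =
      (x $ i - x $ j) * pd j (Mop_cleared \<alpha> j q u) x + (\<alpha> $ j - 1) * Mop_cleared \<alpha> j q u x"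
    unfolding Mop_cleared_def[of "\<alpha> + unitv i - unitv j"] vjq pd_Lop[OF u x] pd_Mop_cleared[OF u x]
    using assms(4-6)
    by (simp add: Mop_cleared_def algebra_simps)
  moreover have "pd j (Mop_cleared \<alpha> j q u) x = 0"
    using pd_eq_0_if_vanishing[OF u(2) x] Ejq by blast
  ultimately show ?thesis
    using Ejq[OF x] by simp
qed

theorem mainTheorem3:
  fixes \<alpha> :: "complex^'n" and i j q :: 'n
    and \<Omega> :: "(complex^'n) set" and u :: "complex^'n \<Rightarrow> complex"
  assumes "CARD('n) \<ge> 3"
    and "i \<noteq> j" "i \<noteq> q" "j \<noteq> q"
    and "open \<Omega>" "connected \<Omega>" "simply_connected \<Omega>"
    and "\<Omega> \<subseteq> {x. \<forall>a b. a \<noteq> b \<longrightarrow> x $ a \<noteq> x $ b}"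
    and "holo_on u \<Omega>"
    and "\<forall>x\<in>\<Omega>. Mop \<alpha> i j u x = 0"
    and "\<forall>x\<in>\<Omega>. Mop \<alpha> i q u x = 0"
    and "\<forall>x\<in>\<Omega>. Mop \<alpha> j q u x = 0"
  shows "\<forall>x\<in>\<Omega>. Mop (\<alpha> + unitv i - unitv j) i j (Lop \<alpha> i j u) x = 0
       \<and> Mop (\<alpha> + unitv i - unitv j) i q (Lop \<alpha> i j u) x = 0
       \<and> Mop (\<alpha> + unitv i - unitv j) j q (Lop \<alpha> i j u) x = 0"
proof -
  have u: "sep_holomorphic_on u \<Omega>" "open \<Omega>"
    using assms(5,9) by (simp_all add: holo_on_imp_sep_holomorphic_on)
  have cleared: "Mop_cleared \<beta> a b w x = 0 \<longleftrightarrow> Mop \<beta> a b w x = 0" if "x \<in> \<Omega>" "a \<noteq> b" for \<beta> a b w x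
    using Mop_cleared_eq_mult_Mop[of x a b \<beta> w] assms(8) that by auto
  have Eij: "Mop_cleared \<alpha> i j u y = 0" and Eiq: "Mop_cleared \<alpha> i q u y = 0"
    and Ejq: "Mop_cleared \<alpha> j q u y = 0" if "y \<in> \<Omega>" for y
    using assms(2-4,10-12) cleared that by blast+
  show ?thesis
    using Mop_cleared_Lop_ij[OF u _ assms(2) Eij] Mop_cleared_Lop_iq[OF u _ assms(2-4) Eiq Ejq]
      Mop_cleared_Lop_jq[OF u _ assms(2-4) Ejq] cleared assms(2-4) by blast
qed

end
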